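(* Let $(M,g)$ be a 5-dimensional Lorentzian manifold, $p\in M$, and suppose the Weyl tensor at $p$ is of alignment type N: there is a null frame $(\ell,n,m_3,m_4,m_5)$ in which the only non-vanishing Weyl components are $C_{1i1j}=:\check H_{ij}$ (a nonzero symmetric traceless $3\times3$ matrix). Let $\mathsf C$ be the Weyl operator $F^{ab}\mapsto\tfrac12 C^{ab}{}_{cd}F^{cd}$ on $\wedge^2T_pM$. Then $\mathsf C^2=0$, $\operatorname{rank}\mathsf C=\operatorname{rank}\check H\in\{2,3\}$, and: (i) if $\operatorname{rank}\check H=3$ (all eigenvalues of $\check H$ nonzero), the Jordan normal form of $\mathsf C$ consists of three Jordan blocks of size 2 and four of size 1 (Segre type $[(2221111)]$); (ii) if $\operatorname{rank}\check H=2$, equivalently the eigenvalues of $\check H$ are $\{a,-a,0\}$ with $a\neq0$, the Jordan normal form of $\mathsf C$ consists of two Jordan blocks of size 2 and six of size 1 (Segre type $[(22111111)]$), all with eigenvalue $0$.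
   Context: A null frame $(\ell,n,m_i)$, $i=3,4,5$, consists of null vectors $\ell,n$ with $g(\ell,n)=1$ and orthonormal spacelike $m_i$ orthogonal to $\ell,n$; frame index $0$ refers to $\ell$, $1$ to $n$. $\wedge^2T_pM$ is the 10-dimensional space of contravariant bivectors at $p$. *)

theory Defs
  imports "Jordan_Normal_Form.Jordan_Normal_Form" "Jordan_Normal_Form.DL_Rank"
begin

(* Coordinates w.r.t. the null frame (l, n, m3, m4, m5) at p:
   frame index 0 = l, 1 = n, 2 = m3, 3 = m4, 4 = m5.
   The metric in this frame: g(l,n) = 1, g(m_i,m_i) = 1, all else 0;
   its inverse g^{ab} has the same components. *)

definition ginv :: "nat \<Rightarrow> nat \<Rightarrow> real" where
  "ginv a b = (if (a = 0 \<and> b = 1) \<or> (a = 1 \<and> b = 0) \<or> (a = b \<and> 2 \<le> a \<and> a < 5) then 1 else 0)"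

(* Auxiliary: for an index pair (a,b), returns (sign, i) such that the pair
   is sign * (1, m_{i+3}) up to antisymmetry, or sign 0 otherwise. *)
definition npair :: "nat \<Rightarrow> nat \<Rightarrow> real \<times> nat" where
  "npair a b = (if a = 1 \<and> 2 \<le> b \<and> b < 5 then (1, b - 2)
               else if b = 1 \<and> 2 \<le> a \<and> a < 5 then (-1, a - 2)
               else (0, 0))"

(* Weyl tensor C_{abcd} (all indices down) of type N in the null frame:
   the only non-vanishing components are C_{1i1j} = H_{ij} and those
   obtained from them by the Weyl-tensor symmetries. *)
definition weylN :: "real mat \<Rightarrow> nat \<Rightarrow> nat \<Rightarrow> nat \<Rightarrow> nat \<Rightarrow> real" where
  "weylN H a b c d = fst (npair a b) * fst (npair c d) * H $$ (snd (npair a b), snd (npair c d))"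

definition bivectors :: "(nat \<Rightarrow> nat \<Rightarrow> real) set" where
  "bivectors = {F. (\<forall>a b. F a b = - F b a) \<and> (\<forall>a b. 5 \<le> a \<or> 5 \<le> b \<longrightarrow> F a b = 0)}"

definition weyl_op :: "real mat \<Rightarrow> (nat \<Rightarrow> nat \<Rightarrow> real) \<Rightarrow> (nat \<Rightarrow> nat \<Rightarrow> real)" where
  "weyl_op H F = (\<lambda>a b. 1/2 * (\<Sum>c<5. \<Sum>d<5.
      (\<Sum>e<5. \<Sum>f<5. ginv a e * ginv b f * weylN H e f c d) * F c d))"

definition bv_pairs :: "(nat \<times> nat) list" where
  "bv_pairs = concat (map (\<lambda>a. map (\<lambda>b. (a, b)) [Suc a..<5]) [0..<5])"

definition bv_basis :: "nat \<Rightarrow> (nat \<Rightarrow> nat \<Rightarrow> real)" where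
  "bv_basis k = (\<lambda>a b. if (a, b) = bv_pairs ! k then 1
                        else if (b, a) = bv_pairs ! k then -1 else 0)"

definition weyl_mat :: "real mat \<Rightarrow> real mat" where
  "weyl_mat H = mat 10 10 (\<lambda>(i, j). weyl_op H (bv_basis j) (fst (bv_pairs ! i)) (snd (bv_pairs ! i)))"

end

theory Submission
  imports Defs "Jordan_Normal_Form.DL_Rank_Submatrix"
begin

(* In the basis e_a \<wedge> e_b of the bivectors, a type N Weyl operator has a single nonzero block:
   it sends n\<wedge>m_j to \<Sum>_i H_ij l\<wedge>m_i and kills l\<wedge>m_i, l\<wedge>n and m_i\<wedge>m_j. Hence its square
   vanishes and its rank is rank H. Choose invertible B, C with H B = C diag(1,...,1,0,...,0),
   r = rank H ones, and read their columns b_k, c_k as vectors in the span of the m_i. Then each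
   n\<wedge>b_k \<mapsto> l\<wedge>c_k with k < r is a Jordan chain of length 2 and the remaining 10 - 2r basis
   bivectors are killed, which gives the Jordan form. For symmetric traceless H,
   det (k - H) = k^3 - |H|^2/2 k - det H with the Frobenius norm |H| \<noteq> 0: either det H \<noteq> 0 and
   rank H = 3, or det H = 0, some principal 2\<times>2 minor is nonzero, rank H = 2 and the spectrum is
   {a, -a, 0} with a = |H|/sqrt 2. *)

lemma less_3_cases: "(i::nat) < 3 \<Longrightarrow> i = 0 \<or> i = 1 \<or> i = 2"
  by auto

lemma less_10_cases: "(i::nat) < 10 \<Longrightarrow> i = 0 \<or> i = 1 \<or> i = 2 \<or> i = 3 \<or> i = 4 \<or> i = 5 \<or> i = 6 \<or> i = 7 \<or> i = 8 \<or> i = 9"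
  by auto

lemma sum_lessThan_3: "(\<Sum>k<(3::nat). f k) = f 0 + f 1 + (f 2 :: 'a :: comm_monoid_add)"
  by (simp add: eval_nat_numeral)

lemma sum_lessThan_5: "(\<Sum>k<(5::nat). f k) = f 0 + f 1 + f 2 + f 3 + (f 4 :: 'a :: comm_monoid_add)"
  by (simp add: eval_nat_numeral)

lemma sum_lessThan_10:
  "(\<Sum>k<(10::nat). f k) = f 0 + f 1 + f 2 + f 3 + f 4 + f 5 + f 6 + f 7 + f 8 + (f 9 :: 'a :: comm_monoid_add)"
  by (simp add: eval_nat_numeral)

section \<open>The Weyl operator in the bivector basis\<close>

definition raise_index :: "nat \<Rightarrow> nat" where
  "raise_index a = (if a = 0 then 1 else if a = 1 then 0 else a)"

lemma ginv_contract: "a < 5 \<Longrightarrow> (\<Sum>e<5. ginv a e * X e) = X (raise_index a)"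
  by (auto simp: sum_lessThan_5 ginv_def raise_index_def less_Suc_eq numeral_eq_Suc)

lemma weyl_op_eq:
  assumes "a < 5" "b < 5"
  shows "weyl_op H F a b = 1/2 * (\<Sum>c<5. \<Sum>d<5. weylN H (raise_index a) (raise_index b) c d * F c d)"
proof -
  have "(\<Sum>e<5. \<Sum>f<5. ginv a e * ginv b f * weylN H e f c d)
      = weylN H (raise_index a) (raise_index b) c d" for c d
    by (simp add: mult.assoc flip: sum_distrib_left, simp add: ginv_contract assms)
  then show ?thesis unfolding weyl_op_def by simp
qed

lemma weylN_swap: "weylN H a b d c = - weylN H a b c d"
  unfolding weylN_def npair_def by auto

lemma weylN_nonzero_pairs: "weylN H a b c d \<noteq> 0 \<Longrightarrow> (c = 1 \<and> 2 \<le> d \<and> d < 5) \<or> (d = 1 \<and> 2 \<le> c \<and> c < 5)"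
  unfolding weylN_def npair_def by (auto split: if_splits)

lemma weylN_raise_1:
  assumes "c = 1 \<or> d = 1"
  shows "weylN H (raise_index c) (raise_index d) e f = 0"
  using assms unfolding weylN_def npair_def raise_index_def by auto

(* C F has nonzero components only at index pairs containing 0, while C reads F only at
   index pairs containing 1. *)
lemma weyl_op_square_zero: "weyl_op H (weyl_op H F) = (\<lambda>a b. 0)"
proof (intro ext)
  fix a b
  show "weyl_op H (weyl_op H F) a b = 0"
  proof (cases "a < 5 \<and> b < 5")
    case True
    have "weylN H (raise_index a) (raise_index b) c d * weyl_op H F c d = 0" for c d
    proof (cases "weylN H (raise_index a) (raise_index b) c d = 0")
      case False
      then have "(c = 1 \<or> d = 1) \<and> c < 5 \<and> d < 5" using weylN_nonzero_pairs[OF False] by auto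
      then show ?thesis by (simp add: weyl_op_eq weylN_raise_1)
    qed simp
    moreover have "weyl_op H (weyl_op H F) a b
        = 1/2 * (\<Sum>c<5. \<Sum>d<5. weylN H (raise_index a) (raise_index b) c d * weyl_op H F c d)"
      using True by (intro weyl_op_eq) auto
    ultimately show ?thesis by simp
  next
    case False
    then have "ginv a e * ginv b f = 0" for e f unfolding ginv_def by auto
    then show ?thesis unfolding weyl_op_def by simp
  qed
qed

(* In the basis bv_pairs, positions 1,2,3 are l\<wedge>m_i and 4,5,6 are n\<wedge>m_i; C maps n\<wedge>m_j to
   \<Sum>_i H_ij l\<wedge>m_i and kills every other basis bivector. *)
definition weyl_block :: "'a :: zero mat \<Rightarrow> 'a mat" where
  "weyl_block H = mat 10 10 (\<lambda>(i, j). if i \<in> {1,2,3} \<and> j \<in> {4,5,6} then H $$ (i - 1, j - 4) else 0)"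

lemma bv_pairs_eq: "bv_pairs = [(0,1),(0,2),(0,3),(0,4),(1,2),(1,3),(1,4),(2,3),(2,4),(3,4)]"
  by (simp add: bv_pairs_def upt_rec)

lemma sum_bv_basis:
  assumes "bv_pairs ! j = (c0, d0)" "c0 < d0" "d0 < 5"
  shows "(\<Sum>c<5. \<Sum>d<5. G c d * bv_basis j c d) = G c0 d0 - (G d0 c0 :: real)"
proof -
  have "(\<Sum>d<5. G c d * bv_basis j c d)
      = (if c = c0 then G c0 d0 else 0) - (if c = d0 then G d0 c0 else 0)" for c
    using assms unfolding bv_basis_def by (auto simp: if_distrib sum.If_cases)
  then show ?thesis using assms by (simp add: sum_subtractf)
qed

lemma weylN_bv_pairs:
  assumes "i < 10" "j < 10"
  shows "weylN H (raise_index (fst (bv_pairs ! i))) (raise_index (snd (bv_pairs ! i)))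
           (fst (bv_pairs ! j)) (snd (bv_pairs ! j)) = weyl_block H $$ (i, j)"
  using less_10_cases[OF assms(1)] less_10_cases[OF assms(2)]
  by (elim disjE; simp add: bv_pairs_eq weyl_block_def weylN_def npair_def raise_index_def)

lemma weyl_mat_eq_weyl_block: "weyl_mat H = weyl_block H"
proof (rule eq_matI)
  fix i j assume "i < dim_row (weyl_block H)" "j < dim_col (weyl_block H)"
  then have i: "i < 10" and j: "j < 10" by (auto simp: weyl_block_def)
  obtain c d where cd: "bv_pairs ! j = (c, d)" by force
  have "c < d \<and> d < 5" "fst (bv_pairs ! i) < 5" "snd (bv_pairs ! i) < 5"
    using less_10_cases[OF i] less_10_cases[OF j] cd by (elim disjE; simp add: bv_pairs_eq)+
  then show "weyl_mat H $$ (i, j) = weyl_block H $$ (i, j)"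
    using i j cd sum_bv_basis[OF cd] weylN_bv_pairs[OF i j]
    by (simp add: weyl_mat_def weyl_op_eq weylN_swap[of H _ _ d c])
qed (auto simp: weyl_mat_def weyl_block_def)

section \<open>Spectrum of a symmetric traceless 3\<times>3 matrix\<close>

lemma det_dim_2:
  assumes "A \<in> carrier_mat 2 2"
  shows "det A = A $$ (0,0) * A $$ (1,1) - A $$ (0,1) * A $$ (1,0)"
proof -
  have "det A = (\<Sum>i<2. A $$ (i,0) * cofactor A i 0)"
    by (rule laplace_expansion_column[OF assms]) simp
  then show ?thesis
    using assms by (simp add: numeral_2_eq_2 cofactor_def det_single mat_delete_carrier mat_delete_def)
qed

lemma det_dim_3:
  assumes "A \<in> carrier_mat 3 3"
  shows "det A = A$$(0,0) * (A$$(1,1) * A$$(2,2) - A$$(1,2) * A$$(2,1))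
     - A$$(1,0) * (A$$(0,1) * A$$(2,2) - A$$(0,2) * A$$(2,1))
     + A$$(2,0) * (A$$(0,1) * A$$(1,2) - A$$(0,2) * A$$(1,1))"
proof -
  have "det A = (\<Sum>i<3. A $$ (i,0) * cofactor A i 0)"
    by (rule laplace_expansion_column[OF assms]) simp
  then show ?thesis
    using assms by (simp add: numeral_3_eq_3 cofactor_def det_dim_2 mat_delete_def numeral_2_eq_2 algebra_simps)
qed

lemma det_char_matrix_dim_3:
  fixes A :: "'a :: field mat"
  assumes A: "A \<in> carrier_mat 3 3"
  shows "det (char_matrix A k) = - (k ^ 3) + (A$$(0,0) + A$$(1,1) + A$$(2,2)) * k ^ 2
      - ((A$$(0,0) * A$$(1,1) - A$$(0,1) * A$$(1,0)) + (A$$(0,0) * A$$(2,2) - A$$(0,2) * A$$(2,0))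
        + (A$$(1,1) * A$$(2,2) - A$$(1,2) * A$$(2,1))) * k + det A"
proof -
  have cubic: "(a - k) * ((e - k) * (i - k) - f * h) - d * (b * (i - k) - c * h) + g * (b * f - c * (e - k))
      = - (k ^ 3) + (a + e + i) * k ^ 2 - ((a * e - b * d) + (a * i - c * g) + (e * i - f * h)) * k
        + (a * (e * i - f * h) - d * (b * i - c * h) + g * (b * f - c * e))" for a b c d e f g h i :: 'a
    by (simp add: power2_eq_square power3_eq_cube algebra_simps)
  have entry: "char_matrix A k $$ (i,j) = A $$ (i,j) - (if i = j then k else 0)" if "i < 3" "j < 3" for i j
    using A that by (simp add: char_matrix_def)
  have "det (char_matrix A k)
      = (A$$(0,0) - k) * ((A$$(1,1) - k) * (A$$(2,2) - k) - A$$(1,2) * A$$(2,1))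
        - A$$(1,0) * (A$$(0,1) * (A$$(2,2) - k) - A$$(0,2) * A$$(2,1))
        + A$$(2,0) * (A$$(0,1) * A$$(1,2) - A$$(0,2) * (A$$(1,1) - k))"
    unfolding det_dim_3[OF char_matrix_closed[OF A]] by (simp add: entry)
  then show ?thesis unfolding det_dim_3[OF A] cubic .
qed

definition frobenius_sq :: "'a :: comm_ring_1 mat \<Rightarrow> 'a" where
  "frobenius_sq A = (\<Sum>i<dim_row A. \<Sum>j<dim_col A. (A $$ (i,j))\<^sup>2)"

lemma frobenius_sq_pos:
  fixes A :: "real mat"
  assumes "A \<in> carrier_mat n m" "A \<noteq> 0\<^sub>m n m"
  shows "0 < frobenius_sq A"
proof -
  obtain i j where ij: "i < n" "j < m" "A $$ (i,j) \<noteq> 0"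
    using assms by (metis carrier_matD eq_matI index_zero_mat)
  have "0 < (\<Sum>j'<m. (A $$ (i,j'))\<^sup>2)"
    using ij by (intro sum_pos2[of _ j]) auto
  also have "\<dots> \<le> (\<Sum>i'<n. \<Sum>j'<m. (A $$ (i',j'))\<^sup>2)"
    using ij by (intro member_le_sum) (auto intro: sum_nonneg)
  also have "\<dots> = frobenius_sq A"
    using assms by (simp add: frobenius_sq_def)
  finally show ?thesis .
qed

locale sym_traceless_3 =
  fixes H :: "real mat"
  assumes carrier: "H \<in> carrier_mat 3 3"
    and symmetric: "transpose_mat H = H"
    and traceless: "H $$ (0,0) + H $$ (1,1) + H $$ (2,2) = 0"
begin

lemma symmetric_entry: "i < 3 \<Longrightarrow> j < 3 \<Longrightarrow> H $$ (j,i) = H $$ (i,j)"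
  using symmetric carrier by (metis carrier_matD index_transpose_mat(1))

lemma principal_minors_sum:
  "(H$$(0,0) * H$$(1,1) - H$$(0,1) * H$$(1,0)) + (H$$(0,0) * H$$(2,2) - H$$(0,2) * H$$(2,0))
    + (H$$(1,1) * H$$(2,2) - H$$(1,2) * H$$(2,1)) = - frobenius_sq H / 2"
proof -
  have tr: "H$$(2,2) = - H$$(0,0) - H$$(1,1)" using traceless by simp
  show ?thesis
    using carrier symmetric_entry[of 0 1] symmetric_entry[of 0 2] symmetric_entry[of 1 2]
    by (simp add: frobenius_sq_def sum_lessThan_3 power2_eq_square algebra_simps tr)
qed

lemma det_char_matrix: "det (char_matrix H k) = frobenius_sq H / 2 * k - k ^ 3 + det H"
  using det_char_matrix_dim_3[OF carrier, of k] unfolding traceless principal_minors_sum by simp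

lemma eigenvalue_iff_cubic: "eigenvalue H k \<longleftrightarrow> k ^ 3 = frobenius_sq H / 2 * k + det H"
  using eigenvalue_det[OF carrier] det_char_matrix by auto

lemma eigenvalue_0_iff: "eigenvalue H 0 \<longleftrightarrow> det H = 0"
  by (simp add: eigenvalue_iff_cubic)

lemma principal_minor_nonzero:
  assumes "H \<noteq> 0\<^sub>m 3 3"
  obtains p q where "p < q" "q < 3" "H$$(p,p) * H$$(q,q) - H$$(p,q) * H$$(q,p) \<noteq> 0"
proof -
  have "frobenius_sq H \<noteq> 0" using frobenius_sq_pos[OF carrier assms] by simp
  then have "H$$(0,0) * H$$(1,1) - H$$(0,1) * H$$(1,0) \<noteq> 0 \<or> H$$(0,0) * H$$(2,2) - H$$(0,2) * H$$(2,0) \<noteq> 0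
      \<or> H$$(1,1) * H$$(2,2) - H$$(1,2) * H$$(2,1) \<noteq> 0"
    using principal_minors_sum by auto
  then show ?thesis
  proof (elim disjE)
    assume "H$$(0,0) * H$$(1,1) - H$$(0,1) * H$$(1,0) \<noteq> 0"
    then show ?thesis by (rule that[rotated 2]) simp_all
  next
    assume "H$$(0,0) * H$$(2,2) - H$$(0,2) * H$$(2,0) \<noteq> 0"
    then show ?thesis by (rule that[rotated 2]) simp_all
  next
    assume "H$$(1,1) * H$$(2,2) - H$$(1,2) * H$$(2,1) \<noteq> 0"
    then show ?thesis by (rule that[rotated 2]) simp_all
  qed
qed

lemma eigenvalues_singular:
  assumes "H \<noteq> 0\<^sub>m 3 3" "det H = 0"
  shows "\<exists>a. a \<noteq> 0 \<and> {k. eigenvalue H k} = {a, -a, 0}"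
proof -
  define a where "a = sqrt (frobenius_sq H / 2)"
  have "0 < frobenius_sq H" using frobenius_sq_pos[OF carrier assms(1)] .
  then have "a > 0" and a2: "frobenius_sq H / 2 = a\<^sup>2" by (simp_all add: a_def)
  have "eigenvalue H k \<longleftrightarrow> k * (a - k) * (a + k) = 0" for k
    unfolding eigenvalue_iff_cubic assms(2) a2 by (auto simp: algebra_simps power2_eq_square power3_eq_cube)
  also have "k * (a - k) * (a + k) = 0 \<longleftrightarrow> k = a \<or> k = -a \<or> k = 0" for k
    by (auto simp: add_eq_0_iff)
  finally have "{k. eigenvalue H k} = {a, -a, 0}" by auto
  with \<open>a > 0\<close> show ?thesis by (intro exI[of _ a]) auto
qed

end

section \<open>Rank of the Weyl operator\<close>

lemma pick_2:
  assumes "a < (b::nat)"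
  shows "pick {a,b} 0 = a" "pick {a,b} 1 = b"
proof -
  show p0: "pick {a,b} 0 = a" using assms by (auto intro!: Least_equality)
  show "pick {a,b} 1 = b" using assms p0 by (auto intro!: Least_equality)
qed

lemma pick_3:
  assumes "a < (b::nat)" "b < c"
  shows "pick {a,b,c} 0 = a" "pick {a,b,c} 1 = b" "pick {a,b,c} 2 = c"
proof -
  show p0: "pick {a,b,c} 0 = a" using assms by (auto intro!: Least_equality)
  show p1: "pick {a,b,c} 1 = b" using assms p0 by (auto intro!: Least_equality)
  have "pick {a,b,c} (Suc 1) = c" unfolding pick.simps p1 using assms by (auto intro!: Least_equality)
  then show "pick {a,b,c} 2 = c" by (simp add: numeral_2_eq_2)
qed

lemma rank_ge_2_if_minor:
  fixes A :: "'a :: field mat"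
  assumes A: "A \<in> carrier_mat n nc" and "a < b" "b < n" "c < d" "d < nc"
    and minor: "A $$ (a,c) * A $$ (b,d) - A $$ (a,d) * A $$ (b,c) \<noteq> 0"
  shows "2 \<le> vec_space.rank n A"
proof -
  have I: "{i. i < dim_row A \<and> i \<in> {a,b}} = {a,b}" and J: "{j. j < dim_col A \<and> j \<in> {c,d}} = {c,d}"
    using A assms by auto
  have card: "card {a,b} = 2" "card {c,d} = 2" using assms by auto
  have "dim_row (submatrix A {a,b} {c,d}) = 2" "dim_col (submatrix A {a,b} {c,d}) = 2"
    by (simp only: dim_submatrix I J card)+
  then have S: "submatrix A {a,b} {c,d} \<in> carrier_mat 2 2" by auto
  have "det (submatrix A {a,b} {c,d}) = A $$ (a,c) * A $$ (b,d) - A $$ (a,d) * A $$ (b,c)"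
    unfolding det_dim_2[OF S] using I J card pick_2[OF \<open>a < b\<close>] pick_2[OF \<open>c < d\<close>]
    by (simp add: submatrix_index)
  then have "card {j. j < nc \<and> j \<in> {c,d}} \<le> vec_space.rank n A"
    using vec_space.rank_gt_minor[OF A] minor by metis
  then show ?thesis using J A card by simp
qed

lemma rank_sum_of_products_le:
  fixes u v :: "nat \<Rightarrow> nat \<Rightarrow> 'a :: field"
  shows "vec_space.rank n (mat n nc (\<lambda>(i,j). \<Sum>k<r. u k i * v k j)) \<le> r"
proof (induction r)
  case 0
  have "mat n nc (\<lambda>(i,j). \<Sum>k<0. u k i * v k j) = 0\<^sub>m n nc" by (rule eq_matI) auto
  then show ?case by (metis vec_space.rank_0I order_refl)
next
  case (Suc r)
  let ?M = "\<lambda>r. mat n nc (\<lambda>(i,j). \<Sum>k<r. u k i * v k j)"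
  let ?P = "mat n nc (\<lambda>(i,j). u r i * v r j)"
  have "?M (Suc r) = ?M r + ?P" by (rule eq_matI) auto
  moreover have "vec_space.rank n ?P \<le> 1"
    by (rule vec_space.rank_le_1_product_entries[of _ _ nc "u r" "v r"]) auto
  ultimately show ?case
    using vec_space.rank_subadditive[of "?M r" n nc ?P] Suc.IH by simp
qed

lemma weyl_block_index: "i < 3 \<Longrightarrow> j < 3 \<Longrightarrow> weyl_block H $$ (1 + i, 4 + j) = H $$ (i, j)"
  by (auto simp: weyl_block_def)

lemma rank_weyl_block_le:
  fixes H B B' :: "'a :: field mat"
  assumes H: "H \<in> carrier_mat 3 3" and B: "B \<in> carrier_mat 3 3" and B': "B' \<in> carrier_mat 3 3"
    and inv: "B * B' = 1\<^sub>m 3" and "r \<le> 3"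
    and vanish: "\<And>i k. i < 3 \<Longrightarrow> r \<le> k \<Longrightarrow> k < 3 \<Longrightarrow> (H * B) $$ (i, k) = 0"
  shows "vec_space.rank 10 (weyl_block H) \<le> r"
proof -
  define C where "C = H * B"
  have C: "C \<in> carrier_mat 3 3" using H B by (simp add: C_def)
  have C_vanish: "C $$ (i, k) = 0" if "i < 3" "r \<le> k" "k < 3" for i k
    unfolding C_def using that by (rule vanish)
  have H_eq: "H $$ (a,b) = (\<Sum>k<r. C $$ (a,k) * B' $$ (k,b))" if "a < 3" "b < 3" for a b
  proof -
    have "C * B' = H"
      using H inv by (simp add: C_def assoc_mult_mat[OF H B B'])
    then have "H $$ (a,b) = (C * B') $$ (a,b)" by simp
    also have "\<dots> = (\<Sum>k<3. C $$ (a,k) * B' $$ (k,b))"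
      using C B' that by (simp add: scalar_prod_def atLeast0LessThan)
    also have "\<dots> = (\<Sum>k<r. C $$ (a,k) * B' $$ (k,b))"
      using C_vanish that \<open>r \<le> 3\<close> by (intro sum.mono_neutral_right) auto
    finally show ?thesis .
  qed
  have "weyl_block H = mat 10 10 (\<lambda>(i,j). \<Sum>k<r.
      (if i \<in> {1,2,3} then C $$ (i - 1, k) else 0) * (if j \<in> {4,5,6} then B' $$ (k, j - 4) else 0))"
    by (rule eq_matI) (auto simp: weyl_block_def H_eq)
  then show ?thesis by (simp only:) (rule rank_sum_of_products_le)
qed

section \<open>Jordan normal form of the Weyl operator\<close>

lemma similar_mat_if_intertwining:
  fixes A P J :: "'a :: field mat"
  assumes A: "A \<in> carrier_mat n n" and P: "P \<in> carrier_mat n n" and J: "J \<in> carrier_mat n n"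
    and inj: "\<And>v. v \<in> carrier_vec n \<Longrightarrow> P *\<^sub>v v = 0\<^sub>v n \<Longrightarrow> v = 0\<^sub>v n"
    and AP: "A * P = P * J"
  shows "similar_mat A J"
proof -
  have "det P \<noteq> 0" using det_0_iff_vec_prod_zero_field[OF P] inj by blast
  from det_non_zero_imp_unit[OF P this, unfolded Units_def, of "()"]
  obtain Q where Q: "Q \<in> carrier_mat n n" and QP: "Q * P = 1\<^sub>m n" and PQ: "P * Q = 1\<^sub>m n"
    by (auto simp: ring_mat_def)
  have "P * J * Q = A * (P * Q)" using A P Q by (simp add: AP[symmetric] assoc_mult_mat)
  then have "A = P * J * Q" using A PQ by simp
  then show ?thesis using A P J Q PQ QP by (intro similar_matI[of A J P Q n]) auto
qed

lemma solve_3_homogeneous: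
  fixes A :: "'a :: field mat"
  assumes A: "A \<in> carrier_mat 3 3" and "det A \<noteq> 0"
    and eqs: "\<And>i. i < 3 \<Longrightarrow> A $$ (i,0) * x + A $$ (i,1) * y + A $$ (i,2) * z = 0"
  shows "x = 0 \<and> y = 0 \<and> z = 0"
proof -
  define w where "w = vec 3 (\<lambda>i. if i = 0 then x else if i = 1 then y else z)"
  have w: "w \<in> carrier_vec 3" by (simp add: w_def)
  have "A *\<^sub>v w = 0\<^sub>v 3"
  proof (rule eq_vecI)
    fix i assume "i < dim_vec (0\<^sub>v 3 :: 'a vec)"
    then show "(A *\<^sub>v w) $ i = 0\<^sub>v 3 $ i"
      using A eqs[of i] by (simp add: w_def scalar_prod_def sum_lessThan_3 atLeast0LessThan)
  qed (use A in simp)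
  then have "w = 0\<^sub>v 3" using det_0_iff_vec_prod_zero_field[OF A] assms(2) w by blast
  then have "w $ 0 = 0" "w $ 1 = 0" "w $ 2 = 0" by auto
  then show ?thesis by (simp add: w_def)
qed

definition rank_normal_form :: "'a :: field mat \<Rightarrow> nat \<Rightarrow> 'a mat \<Rightarrow> 'a mat \<Rightarrow> bool" where
  "rank_normal_form H r B C \<longleftrightarrow> B \<in> carrier_mat 3 3 \<and> C \<in> carrier_mat 3 3 \<and> det B \<noteq> 0 \<and> det C \<noteq> 0
     \<and> (\<forall>i<3. \<forall>k<3. (H * B) $$ (i,k) = (if k < r then C $$ (i,k) else 0))"

(* Columns 2k, 2k+1 hold c_k in the l\<wedge>m slots and b_k in the n\<wedge>m slots, so for k < r they
   form a Jordan chain of the Weyl operator; the last four columns are l\<wedge>n and the m_i\<wedge>m_j. *)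
definition chain_basis :: "'a :: {zero,one} mat \<Rightarrow> 'a mat \<Rightarrow> 'a mat" where
  "chain_basis B C = mat 10 10 (\<lambda>(i,j).
     if i \<in> {1,2,3} \<and> j \<in> {0,2,4} then C $$ (i - 1, j div 2)
     else if i \<in> {4,5,6} \<and> j \<in> {1,3,5} then B $$ (i - 4, j div 2)
     else if (i,j) \<in> {(0,6),(7,7),(8,8),(9,9)} then 1 else 0)"

definition sq_zero_jordan :: "nat \<Rightarrow> 'a :: {zero,one} mat" where
  "sq_zero_jordan r = mat 10 10 (\<lambda>(i,j). if even i \<and> i < 2 * r \<and> j = Suc i then 1 else 0)"

lemma jordan_matrix_eq_sq_zero_jordan_3:
  "jordan_matrix [(2,0),(2,0),(2,0),(1,0),(1,0),(1,0),(1,0)] = (sq_zero_jordan 3 :: 'a :: {zero,one} mat)"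
proof (rule eq_matI)
  fix i j assume "i < dim_row (sq_zero_jordan 3 :: 'a mat)" "j < dim_col (sq_zero_jordan 3 :: 'a mat)"
  then have i: "i < 10" and j: "j < 10" by (simp_all add: sq_zero_jordan_def)
  show "jordan_matrix [(2,0),(2,0),(2,0),(1,0),(1,0),(1,0),(1,0)] $$ (i,j) = (sq_zero_jordan 3 :: 'a mat) $$ (i,j)"
    using less_10_cases[OF i] less_10_cases[OF j]
    by (elim disjE; simp add: sq_zero_jordan_def jordan_matrix_def Let_def)
qed (auto simp: sq_zero_jordan_def)

lemma jordan_matrix_eq_sq_zero_jordan_2:
  "jordan_matrix [(2,0),(2,0),(1,0),(1,0),(1,0),(1,0),(1,0),(1,0)] = (sq_zero_jordan 2 :: 'a :: {zero,one} mat)"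
proof (rule eq_matI)
  fix i j assume "i < dim_row (sq_zero_jordan 2 :: 'a mat)" "j < dim_col (sq_zero_jordan 2 :: 'a mat)"
  then have i: "i < 10" and j: "j < 10" by (simp_all add: sq_zero_jordan_def)
  show "jordan_matrix [(2,0),(2,0),(1,0),(1,0),(1,0),(1,0),(1,0),(1,0)] $$ (i,j) = (sq_zero_jordan 2 :: 'a mat) $$ (i,j)"
    using less_10_cases[OF i] less_10_cases[OF j]
    by (elim disjE; simp add: sq_zero_jordan_def jordan_matrix_def Let_def)
qed (auto simp: sq_zero_jordan_def)

lemma rank_normal_formD:
  assumes "rank_normal_form H r B C" "H \<in> carrier_mat 3 3" "i < 3" "k < 3"
  shows "H $$ (i,0) * B $$ (0,k) + H $$ (i,1) * B $$ (1,k) + H $$ (i,2) * B $$ (2,k)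
    = (if k < r then C $$ (i,k) else 0)"
proof -
  have "B \<in> carrier_mat 3 3" "\<forall>i<3. \<forall>k<3. (H * B) $$ (i,k) = (if k < r then C $$ (i,k) else 0)"
    using assms(1) by (auto simp: rank_normal_form_def)
  then show ?thesis
    using assms(2-) by (auto simp: scalar_prod_def sum_lessThan_3 atLeast0LessThan)
qed

lemma weyl_block_mult_index:
  assumes "P \<in> carrier_mat 10 nc" "i < 10" "j < nc"
  shows "(weyl_block H * P) $$ (i,j)
    = (if i \<in> {1,2,3} then H $$ (i-1,0) * P $$ (4,j) + H $$ (i-1,1) * P $$ (5,j) + H $$ (i-1,2) * P $$ (6,j) else 0)"
  using assms by (simp add: weyl_block_def scalar_prod_def atLeast0LessThan sum_lessThan_10)

lemma mult_sq_zero_jordan_index: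
  fixes P :: "'a :: semiring_1 mat"
  assumes "P \<in> carrier_mat n 10" "i < n" "j < 10"
  shows "(P * sq_zero_jordan r) $$ (i,j) = (if odd j \<and> j < 2 * r then P $$ (i, j - 1) else 0)"
  using assms less_10_cases[OF assms(3)]
  by (elim disjE; simp add: sq_zero_jordan_def scalar_prod_def atLeast0LessThan sum_lessThan_10)

lemma weyl_block_chain_basis:
  assumes nf: "rank_normal_form H r B C" and H: "H \<in> carrier_mat 3 3" and "r \<le> 3"
  shows "weyl_block H * chain_basis B C = chain_basis B C * sq_zero_jordan r"
proof (rule eq_matI)
  fix i j assume "i < dim_row (chain_basis B C * sq_zero_jordan r)" "j < dim_col (chain_basis B C * sq_zero_jordan r)"
  then have i: "i < 10" and j: "j < 10" by (simp_all add: chain_basis_def sq_zero_jordan_def)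
  have P: "chain_basis B C \<in> carrier_mat 10 10" by (simp add: chain_basis_def)
  show "(weyl_block H * chain_basis B C) $$ (i,j) = (chain_basis B C * sq_zero_jordan r) $$ (i,j)"
    unfolding weyl_block_mult_index[OF P i j] mult_sq_zero_jordan_index[OF P i j]
    using i less_10_cases[OF j] rank_normal_formD[OF nf H, of "i - 1"] \<open>r \<le> 3\<close>
    by (elim disjE; auto simp: chain_basis_def)
qed (simp_all add: weyl_block_def chain_basis_def sq_zero_jordan_def)

lemma chain_basis_injective:
  fixes B C :: "'a :: field mat"
  assumes B: "B \<in> carrier_mat 3 3" "det B \<noteq> 0" and C: "C \<in> carrier_mat 3 3" "det C \<noteq> 0"
    and v: "v \<in> carrier_vec 10" and Pv: "chain_basis B C *\<^sub>v v = 0\<^sub>v 10"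
  shows "v = 0\<^sub>v 10"
proof -
  have row: "(\<Sum>k<10. chain_basis B C $$ (r,k) * v $ k) = 0" if "r < 10" for r
  proof -
    have "(chain_basis B C *\<^sub>v v) $ r = 0" using Pv that by simp
    then show ?thesis using that v by (simp add: chain_basis_def scalar_prod_def atLeast0LessThan)
  qed
  have "v $ 6 = 0" "v $ 7 = 0" "v $ 8 = 0" "v $ 9 = 0"
    using row[of 0] row[of 7] row[of 8] row[of 9] by (simp_all add: chain_basis_def sum_lessThan_10)
  moreover have "v $ 0 = 0 \<and> v $ 2 = 0 \<and> v $ 4 = 0"
  proof (rule solve_3_homogeneous[OF C])
    show "C $$ (i,0) * v $ 0 + C $$ (i,1) * v $ 2 + C $$ (i,2) * v $ 4 = 0" if "i < 3" for i
      using row[of "Suc i"] less_3_cases[OF that] by (elim disjE; simp add: chain_basis_def sum_lessThan_10)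
  qed
  moreover have "v $ 1 = 0 \<and> v $ 3 = 0 \<and> v $ 5 = 0"
  proof (rule solve_3_homogeneous[OF B])
    show "B $$ (i,0) * v $ 1 + B $$ (i,1) * v $ 3 + B $$ (i,2) * v $ 5 = 0" if "i < 3" for i
      using row[of "4 + i"] less_3_cases[OF that] by (elim disjE; simp add: chain_basis_def sum_lessThan_10)
  qed
  ultimately show ?thesis
    using v by (intro eq_vecI) (auto dest!: less_10_cases)
qed

lemma similar_weyl_block_sq_zero_jordan:
  fixes H :: "'a :: field mat"
  assumes nf: "rank_normal_form H r B C" and H: "H \<in> carrier_mat 3 3" and "r \<le> 3"
  shows "similar_mat (weyl_block H) (sq_zero_jordan r)"
proof (rule similar_mat_if_intertwining)
  show "weyl_block H * chain_basis B C = chain_basis B C * sq_zero_jordan r"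
    by (rule weyl_block_chain_basis[OF assms])
  show "v = 0\<^sub>v 10" if "v \<in> carrier_vec 10" "chain_basis B C *\<^sub>v v = 0\<^sub>v 10" for v
    using chain_basis_injective[OF _ _ _ _ that] nf by (simp add: rank_normal_form_def)
qed (simp_all add: weyl_block_def chain_basis_def sq_zero_jordan_def)

lemma rank_weyl_block_le_rank_normal_form:
  fixes H :: "'a :: field mat"
  assumes nf: "rank_normal_form H r B C" and H: "H \<in> carrier_mat 3 3" and "r \<le> 3"
  shows "vec_space.rank 10 (weyl_block H) \<le> r"
proof -
  have B: "B \<in> carrier_mat 3 3" "det B \<noteq> 0" using nf by (simp_all add: rank_normal_form_def)
  from det_non_zero_imp_unit[OF B, unfolded Units_def, of "()"]
  obtain B' where B': "B' \<in> carrier_mat 3 3" and "B * B' = 1\<^sub>m 3"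
    by (auto simp: ring_mat_def)
  then show ?thesis
    using nf \<open>r \<le> 3\<close> by (intro rank_weyl_block_le[OF H B(1) B']) (auto simp: rank_normal_form_def)
qed

lemma rank_normal_form_nonsingular:
  assumes "H \<in> carrier_mat 3 3" "det H \<noteq> 0"
  shows "rank_normal_form H 3 (1\<^sub>m 3) H"
  using assms by (simp add: rank_normal_form_def)

lemma rank_normal_form_singular:
  fixes H :: "'a :: field mat"
  assumes H: "H \<in> carrier_mat 3 3" and "det H = 0" and "p < q" "q < 3"
    and minor: "H $$ (p,p) * H $$ (q,q) - H $$ (p,q) * H $$ (q,p) \<noteq> 0"
  obtains B C where "rank_normal_form H 2 B C"
proof -
  have "p = 0 \<and> q = 1 \<or> p = 0 \<and> q = 2 \<or> p = 1 \<and> q = 2" using \<open>p < q\<close> \<open>q < 3\<close> by arith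
  then obtain m :: nat where pqm: "(p,q,m) \<in> {(0,1,2),(0,2,1),(1,2,0)}" by auto
  \<comment> \<open>B = (e_p, e_q, z) with z = row_p \<times> row_q spanning the kernel, C = (H e_p, H e_q, e_m).\<close>
  define z where "z i = (if i = p then H$$(p,q) * H$$(q,m) - H$$(p,m) * H$$(q,q)
      else if i = q then H$$(p,m) * H$$(q,p) - H$$(p,p) * H$$(q,m)
      else H$$(p,p) * H$$(q,q) - H$$(p,q) * H$$(q,p))" for i
  define B where "B = mat 3 3 (\<lambda>(i,j). if j = 0 then of_bool (i = p) else if j = 1 then of_bool (i = q) else z i)"
  define C where "C = mat 3 3 (\<lambda>(i,j). if j = 0 then H $$ (i,p) else if j = 1 then H $$ (i,q) else of_bool (i = m))"
  have B: "B \<in> carrier_mat 3 3" and C: "C \<in> carrier_mat 3 3" by (simp_all add: B_def C_def)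
  have "det B \<noteq> 0" "det C \<noteq> 0"
    unfolding det_dim_3[OF B] det_dim_3[OF C] using pqm minor by (auto simp: B_def C_def z_def algebra_simps)
  moreover have "(H * B) $$ (i,k) = (if k < 2 then C $$ (i,k) else 0)" if "i < 3" "k < 3" for i k
  proof -
    have det: "H$$(0,0) * (H$$(1,1) * H$$(2,2) - H$$(1,2) * H$$(2,1))
       - H$$(1,0) * (H$$(0,1) * H$$(2,2) - H$$(0,2) * H$$(2,1))
       + H$$(2,0) * (H$$(0,1) * H$$(1,2) - H$$(0,2) * H$$(1,1)) = 0"
      using \<open>det H = 0\<close> det_dim_3[OF H] by simp
    show ?thesis
      using pqm less_3_cases[OF that(1)] less_3_cases[OF that(2)] H det
      by (auto simp: B_def C_def z_def scalar_prod_def sum_lessThan_3 atLeast0LessThan algebra_simps)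
  qed
  ultimately have "rank_normal_form H 2 B C" using B C by (simp add: rank_normal_form_def)
  then show ?thesis by (rule that)
qed

lemma rank_weyl_block_ge_3:
  fixes H :: "'a :: field mat"
  assumes H: "H \<in> carrier_mat 3 3" and "det H \<noteq> 0"
  shows "3 \<le> vec_space.rank 10 (weyl_block H)"
proof -
  have W: "weyl_block H \<in> carrier_mat 10 10" by (simp add: weyl_block_def)
  have I: "{i. i < dim_row (weyl_block H) \<and> i \<in> {1,2,3}} = {1,2,3}"
    and J: "{j. j < dim_col (weyl_block H) \<and> j \<in> {4,5,6}} = {4,5,6}" by (auto simp: weyl_block_def)
  have p: "pick {1,2,3} 0 = (1::nat)" "pick {1,2,3} 1 = (2::nat)" "pick {1,2,3} 2 = (3::nat)"
    and q: "pick {4,5,6} 0 = (4::nat)" "pick {4,5,6} 1 = (5::nat)" "pick {4,5,6} 2 = (6::nat)"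
    by (rule pick_3; simp)+
  have "submatrix (weyl_block H) {1,2,3} {4,5,6} = H"
  proof (rule eq_matI)
    fix i j assume i: "i < dim_row H" and j: "j < dim_col H"
    then have "submatrix (weyl_block H) {1,2,3} {4,5,6} $$ (i,j)
        = weyl_block H $$ (pick {1,2,3} i, pick {4,5,6} j)"
      using H by (intro submatrix_index; simp only: I J; simp)
    also have "\<dots> = H $$ (i,j)"
    proof -
      have "i < 3" "j < 3" using H i j by simp_all
      then show ?thesis
        using less_3_cases[OF \<open>i < 3\<close>] less_3_cases[OF \<open>j < 3\<close>]
        by (elim disjE; simp only: p q; simp add: weyl_block_def)
    qed
    finally show "submatrix (weyl_block H) {1,2,3} {4,5,6} $$ (i,j) = H $$ (i,j)" .
  qed (use H in \<open>simp_all only: dim_submatrix I J, simp_all\<close>)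
  then have "card {j. j < 10 \<and> j \<in> {4,5,6::nat}} \<le> vec_space.rank 10 (weyl_block H)"
    using vec_space.rank_gt_minor[OF W, of "{1,2,3}" "{4,5,6}"] \<open>det H \<noteq> 0\<close> by simp
  moreover have "{j. j < 10 \<and> j \<in> {4,5,6}} = {4,5,6::nat}" by auto
  ultimately show ?thesis by simp
qed

lemma weyl_block_nonsingular:
  fixes H :: "'a :: field mat"
  assumes H: "H \<in> carrier_mat 3 3" and "det H \<noteq> 0"
  shows "vec_space.rank 10 (weyl_block H) = 3"
    and "jordan_nf (weyl_block H) [(2,0),(2,0),(2,0),(1,0),(1,0),(1,0),(1,0)]"
proof -
  note nf = rank_normal_form_nonsingular[OF assms]
  show "vec_space.rank 10 (weyl_block H) = 3"
    using rank_weyl_block_ge_3[OF assms] rank_weyl_block_le_rank_normal_form[OF nf H] by simp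
  show "jordan_nf (weyl_block H) [(2,0),(2,0),(2,0),(1,0),(1,0),(1,0),(1,0)]"
    unfolding jordan_nf_def jordan_matrix_eq_sq_zero_jordan_3
    using similar_weyl_block_sq_zero_jordan[OF nf H] by simp
qed

lemma weyl_block_singular:
  fixes H :: "'a :: field mat"
  assumes H: "H \<in> carrier_mat 3 3" and "det H = 0" and "p < q" "q < 3"
    and minor: "H $$ (p,p) * H $$ (q,q) - H $$ (p,q) * H $$ (q,p) \<noteq> 0"
  shows "vec_space.rank 10 (weyl_block H) = 2"
    and "jordan_nf (weyl_block H) [(2,0),(2,0),(1,0),(1,0),(1,0),(1,0),(1,0),(1,0)]"
proof -
  obtain B C where nf: "rank_normal_form H 2 B C"
    using rank_normal_form_singular[OF assms] .
  have "2 \<le> vec_space.rank 10 (weyl_block H)"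
  proof (rule rank_ge_2_if_minor[where nc = 10])
    show "weyl_block H $$ (1 + p, 4 + p) * weyl_block H $$ (1 + q, 4 + q)
        - weyl_block H $$ (1 + p, 4 + q) * weyl_block H $$ (1 + q, 4 + p) \<noteq> 0"
      using minor \<open>p < q\<close> \<open>q < 3\<close> weyl_block_index[of p p H] weyl_block_index[of p q H]
        weyl_block_index[of q p H] weyl_block_index[of q q H] by simp
  qed (use \<open>p < q\<close> \<open>q < 3\<close> in \<open>simp_all add: weyl_block_def\<close>)
  then show "vec_space.rank 10 (weyl_block H) = 2"
    using rank_weyl_block_le_rank_normal_form[OF nf H] by simp
  show "jordan_nf (weyl_block H) [(2,0),(2,0),(1,0),(1,0),(1,0),(1,0),(1,0),(1,0)]"
    unfolding jordan_nf_def jordan_matrix_eq_sq_zero_jordan_2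
    using similar_weyl_block_sq_zero_jordan[OF nf H] by simp
qed

theorem mainTheorem2:
  fixes H :: "real mat"
  assumes "H \<in> carrier_mat 3 3"
    and "transpose_mat H = H"
    and "H $$ (0,0) + H $$ (1,1) + H $$ (2,2) = 0"
    and "H \<noteq> 0\<^sub>m 3 3"
  shows "(\<forall>F \<in> bivectors. weyl_op H (weyl_op H F) = (\<lambda>a b. 0))
    \<and> vec_space.rank 10 (weyl_mat H) = vec_space.rank 3 H
    \<and> vec_space.rank 3 H \<in> {2, 3}
    \<and> (vec_space.rank 3 H = 3 \<longleftrightarrow> (\<forall>k. eigenvalue H k \<longrightarrow> k \<noteq> 0))
    \<and> (vec_space.rank 3 H = 3 \<longrightarrow>
         jordan_nf (weyl_mat H) [(2,0),(2,0),(2,0),(1,0),(1,0),(1,0),(1,0)])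
    \<and> (vec_space.rank 3 H = 2 \<longleftrightarrow>
         (\<exists>a::real. a \<noteq> 0 \<and> {k. eigenvalue H k} = {a, -a, 0}))
    \<and> (vec_space.rank 3 H = 2 \<longrightarrow>
         jordan_nf (weyl_mat H) [(2,0),(2,0),(1,0),(1,0),(1,0),(1,0),(1,0),(1,0)])"
proof -
  interpret sym_traceless_3 H using assms(1-3) by unfold_locales
  have rank_3_iff: "vec_space.rank 3 H = 3 \<longleftrightarrow> det H \<noteq> 0"
    using vec_space.det_rank_iff[OF carrier] by simp
  have no_zero_eigenvalue: "(\<forall>k. eigenvalue H k \<longrightarrow> k \<noteq> 0) \<longleftrightarrow> det H \<noteq> 0"
    using eigenvalue_0_iff by auto
  show ?thesis
  proof (cases "det H = 0")
    case False
    then have "0 \<notin> {k. eigenvalue H k}" using eigenvalue_0_iff by simp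
    then have "\<not> (\<exists>a. a \<noteq> 0 \<and> {k. eigenvalue H k} = {a, -a, 0})" by blast
    then show ?thesis
      using weyl_block_nonsingular[OF carrier False] rank_3_iff no_zero_eigenvalue False
      by (simp add: weyl_mat_eq_weyl_block weyl_op_square_zero)
  next
    case True
    obtain p q where pq: "p < q" "q < 3" "H$$(p,p) * H$$(q,q) - H$$(p,q) * H$$(q,p) \<noteq> 0"
      using principal_minor_nonzero[OF assms(4)] .
    have "vec_space.rank 3 H = 2"
      using rank_ge_2_if_minor[OF carrier pq(1,2) pq(1,2) pq(3)] vec_space.det_zero_low_rank[OF carrier True]
      by simp
    then show ?thesis
      using weyl_block_singular[OF carrier True pq] eigenvalues_singular[OF assms(4) True] True
        no_zero_eigenvalue
      by (simp add: weyl_mat_eq_weyl_block weyl_op_square_zero)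
  qed
qed

end
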